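(* Fix $\gamma\in\mathbb R$ and $\alpha>1$. Suppose $(\log n)^2\ll k\ll\sqrt n$ and $m=\frac{k^2n}{4\log n}\big(1+\frac{\gamma}{\sqrt{\log n}}\big)$ (rounded to an integer). Then $$t^*=\mathbb E_1[d_{v_*}]+\frac{\gamma}{\sqrt2}\,\sigma+o(\sigma),$$ where $d_{v_*}$ is the degree of the planted hub vertex under $\mathbb P_1$.
   Context: Let $n,m,k$ be positive integers and $N=\binom n2$; all asymptotics are as $n\to\infty$ with $k=k(n)$, $m=m(n)$, and $a\ll b$ means $a/b\to0$. The planted distribution $\mathbb P_1$ is the law of the random graph obtained as follows: choose a hub vertex $v_*\in[n]$ uniformly at random; choose a uniformly random set $S$ of $k$ of the $n-1$ possible edges incident to $v_*$; then choose a uniformly random set of $m-k$ edges among the $N-k$ possible edges not in $S$; the graph consists of these $m$ edges. Let $p=m/N$ and $\sigma^2=(n-1)p(1-p)\frac{N}{N-1}\cdot\frac{N-(n-1)}{N-1}$ (the variance of a vertex degree in $G(n,m)$). For a fixed $\alpha>0$, the threshold is $$t^*=\frac{2m}{n}+\sqrt{\frac{2m}{n}\Big(1-\frac mN\Big)}\sqrt{2\log n-\frac1\alpha\log\log n}.$$ *)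

theory Defs
  imports "HOL-Probability.Probability" "HOL-Library.Landau_Symbols"
begin

definition all_edges :: "nat \<Rightarrow> nat set set" where
  "all_edges n = {e. \<exists>i j. i < n \<and> j < n \<and> i \<noteq> j \<and> e = {i, j}}"

definition incident_edges :: "nat \<Rightarrow> nat \<Rightarrow> nat set set" where
  "incident_edges n v = {e \<in> all_edges n. v \<in> e}"

definition degree :: "nat set set \<Rightarrow> nat \<Rightarrow> nat" where
  "degree G v = card {e \<in> G. v \<in> e}"

definition planted :: "nat \<Rightarrow> nat \<Rightarrow> nat \<Rightarrow> (nat \<times> nat set set) pmf" where
  "planted n m k =
     bind_pmf (pmf_of_set {..<n}) (\<lambda>v.
     bind_pmf (pmf_of_set {S. S \<subseteq> incident_edges n v \<and> card S = k}) (\<lambda>S.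
     bind_pmf (pmf_of_set {T. T \<subseteq> all_edges n - S \<and> card T = m - k}) (\<lambda>T.
     return_pmf (v, S \<union> T))))"

definition hub_degree_mean :: "nat \<Rightarrow> nat \<Rightarrow> nat \<Rightarrow> real" where
  "hub_degree_mean n m k =
     measure_pmf.expectation (planted n m k) (\<lambda>(v, G). real (degree G v))"

definition NN :: "nat \<Rightarrow> real" where
  "NN n = real (n choose 2)"

definition sigma_deg :: "nat \<Rightarrow> nat \<Rightarrow> real" where
  "sigma_deg n m =
     (let N = NN n; p = real m / N in
      sqrt ((real n - 1) * p * (1 - p) * (N / (N - 1)) * ((N - (real n - 1)) / (N - 1))))"

definition tstar :: "real \<Rightarrow> nat \<Rightarrow> nat \<Rightarrow> real" where
  "tstar \<alpha> n m =
     2 * real m / real n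
     + sqrt (2 * real m / real n * (1 - real m / NN n))
       * sqrt (2 * ln (real n) - (1 / \<alpha>) * ln (ln (real n)))"

end

theory Submission
  imports Defs "HOL-Real_Asymp.Real_Asymp"
begin

text \<open>Under the planted law the hub carries its \<open>k\<close> planted edges plus a hypergeometric share
  of the other \<open>m - k\<close>, so \<open>E\<^sub>1[d] = k + (m - k)(n - 1 - k)/(N - k)\<close>, which exceeds the
  mean degree \<open>2m/n\<close> of \<open>G(n,m)\<close> by \<open>k + o(\<sigma>)\<close>. For the chosen \<open>m\<close> one has
  \<open>\<sigma> \<sim> k / sqrt(2 ln n)\<close> and
  \<open>sqrt(2m/n (1 - m/N)) sqrt(2 ln n) = k (1 + \<gamma> / (2 sqrt(ln n))) + o(\<sigma>)\<close>, while the
  \<open>ln ln n\<close> term of \<open>t\<^sup>*\<close> moves it only by \<open>o(\<sigma>)\<close>. Hence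
  \<open>t\<^sup>* - E\<^sub>1[d] = \<gamma> k / (2 sqrt(ln n)) + o(\<sigma>) = \<gamma> \<sigma> / sqrt 2 + o(\<sigma>)\<close>.\<close>

lemma all_edges_eq: "all_edges n = {e. e \<subseteq> {..<n} \<and> card e = 2}"
  unfolding all_edges_def by (auto simp: card_2_iff)

lemma finite_all_edges [simp]: "finite (all_edges n)"
  unfolding all_edges_eq by (rule finite_subset[of _ "Pow {..<n}"]) auto

lemma card_all_edges: "card (all_edges n) = n choose 2"
  unfolding all_edges_eq using n_subsets[of "{..<n}" 2] by simp

lemma incident_edges_subset: "incident_edges n v \<subseteq> all_edges n"
  unfolding incident_edges_def by auto

lemma finite_incident_edges [simp]: "finite (incident_edges n v)"
  using finite_subset[OF incident_edges_subset] by simp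

lemma card_incident_edges:
  assumes "v < n"
  shows "card (incident_edges n v) = n - 1"
proof -
  have eq: "incident_edges n v = (\<lambda>j. {v, j}) ` ({..<n} - {v})"
    using assms unfolding incident_edges_def all_edges_def by auto
  have "inj_on (\<lambda>j. {v, j}) ({..<n} - {v})"
    by (auto simp: inj_on_def doubleton_eq_iff)
  then show ?thesis
    unfolding eq using assms by (simp add: card_image)
qed

lemma degree_eq_card_Int_incident_edges:
  assumes "G \<subseteq> all_edges n"
  shows "degree G v = card (G \<inter> incident_edges n v)"
proof -
  have "{e \<in> G. v \<in> e} = G \<inter> incident_edges n v"
    using assms unfolding incident_edges_def by auto
  then show ?thesis
    unfolding degree_def by simp
qed

lemma subsets_with_card_nonempty:
  assumes "r \<le> card A"
  shows "{T. T \<subseteq> A \<and> card T = r} \<noteq> {}"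
  using obtain_subset_with_card_n[OF assms] by blast

lemma card_subsets_containing:
  assumes "finite A" "e \<in> A" "r \<ge> 1"
  shows "card {T. (T \<subseteq> A \<and> card T = r) \<and> e \<in> T} = (card A - 1) choose (r - 1)"
proof -
  have eq: "{T. (T \<subseteq> A \<and> card T = r) \<and> e \<in> T} = insert e ` {U. U \<subseteq> A - {e} \<and> card U = r - 1}"
  proof (intro equalityI subsetI)
    fix T assume T: "T \<in> {T. (T \<subseteq> A \<and> card T = r) \<and> e \<in> T}"
    then have "finite T" using assms finite_subset by blast
    then have "T - {e} \<in> {U. U \<subseteq> A - {e} \<and> card U = r - 1}" using T by auto
    moreover have "T = insert e (T - {e})" using T by auto
    ultimately show "T \<in> insert e ` {U. U \<subseteq> A - {e} \<and> card U = r - 1}" by blast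
  next
    fix T assume "T \<in> insert e ` {U. U \<subseteq> A - {e} \<and> card U = r - 1}"
    then obtain U where U: "U \<subseteq> A - {e}" "card U = r - 1" "T = insert e U" by auto
    moreover have "finite U" "e \<notin> U" using U assms finite_subset by blast+
    ultimately show "T \<in> {T. (T \<subseteq> A \<and> card T = r) \<and> e \<in> T}"
      using U assms by auto
  qed
  have "inj_on (insert e) {U. U \<subseteq> A - {e} \<and> card U = r - 1}"
    by (auto simp: inj_on_def)
  then show ?thesis
    unfolding eq using assms by (simp add: card_image n_subsets)
qed

lemma expectation_card_Int_uniform_subset:
  assumes A: "finite A" and B: "B \<subseteq> A" and r: "r \<le> card A"
  shows "measure_pmf.expectation (pmf_of_set {T. T \<subseteq> A \<and> card T = r}) (\<lambda>T. real (card (T \<inter> B)))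
         = real r * real (card B) / real (card A)"
proof -
  define F where "F = {T. T \<subseteq> A \<and> card T = r}"
  have finF: "finite F" and neF: "F \<noteq> {}"
    unfolding F_def using A subsets_with_card_nonempty[OF r] by simp_all
  have cardF: "card F = card A choose r"
    unfolding F_def using n_subsets[OF A] by simp
  have finB: "finite B" using A B finite_subset by blast
  have "(\<Sum>T\<in>F. real (card (T \<inter> B))) = (\<Sum>T\<in>F. \<Sum>e\<in>B. if e \<in> T then 1 else 0)"
    by (intro sum.cong refl) (simp add: sum.If_cases finB Int_commute)
  also have "\<dots> = (\<Sum>e\<in>B. \<Sum>T\<in>F. if e \<in> T then 1 else 0)"
    by (rule sum.swap)
  also have "\<dots> = (\<Sum>e\<in>B. real (card {T\<in>F. e \<in> T}))"
    by (intro sum.cong refl) (simp add: sum.If_cases finF Collect_conj_eq Int_commute)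
  finally have double_count: "(\<Sum>T\<in>F. real (card (T \<inter> B))) = (\<Sum>e\<in>B. real (card {T\<in>F. e \<in> T}))" .
  show ?thesis
  proof (cases "r = 0")
    case True
    then have "\<And>T. T \<in> F \<Longrightarrow> T = {}"
      unfolding F_def using A finite_subset by fastforce
    then have "(\<Sum>T\<in>F. real (card (T \<inter> B))) = 0"
      by (intro sum.neutral) force
    then show ?thesis
      using True integral_pmf_of_set[OF neF finF, of "\<lambda>T. real (card (T \<inter> B))"]
      unfolding F_def by simp
  next
    case False
    have "\<And>e. e \<in> B \<Longrightarrow> card {T\<in>F. e \<in> T} = (card A - 1) choose (r - 1)"
      unfolding F_def using card_subsets_containing[OF A] B False by auto
    then have "(\<Sum>T\<in>F. real (card (T \<inter> B))) = real (card B) * real ((card A - 1) choose (r - 1))"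
      using double_count by simp
    moreover have "real r * real (card A choose r) = real (card A) * real ((card A - 1) choose (r - 1))"
      using times_binomial_minus1_eq[of r "card A"] False by (metis of_nat_mult gr0I)
    moreover have "real (card A choose r) > 0"
      using r by simp
    moreover have "real (card A) > 0"
      using r False by simp
    ultimately show ?thesis
      by (simp add: integral_pmf_of_set[OF neF finF] F_def[symmetric] cardF field_simps)
  qed
qed

lemma expectation_card_Int_union_uniform_subset:
  assumes A: "finite A" and SI: "S \<subseteq> I" "I \<subseteq> A" and r: "r \<le> card (A - S)"
  shows "measure_pmf.expectation (pmf_of_set {T. T \<subseteq> A - S \<and> card T = r})
           (\<lambda>T. real (card ((S \<union> T) \<inter> I)))
         = real (card S) + real r * real (card (I - S)) / real (card (A - S))"
proof -
  define F where "F = {T. T \<subseteq> A - S \<and> card T = r}"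
  have finF: "finite F" and neF: "F \<noteq> {}"
    unfolding F_def using A subsets_with_card_nonempty[OF r] by simp_all
  have "card ((S \<union> T) \<inter> I) = card S + card (T \<inter> (I - S))" if "T \<in> F" for T
  proof -
    have "(S \<union> T) \<inter> I = S \<union> T \<inter> (I - S)" "S \<inter> (T \<inter> (I - S)) = {}"
      using SI by blast+
    moreover have "finite S" "finite T"
      using that SI A unfolding F_def by (auto intro: rev_finite_subset)
    ultimately show ?thesis by (simp add: card_Un_disjoint)
  qed
  then have "(\<Sum>T\<in>F. real (card ((S \<union> T) \<inter> I))) / card F
      = real (card S) + (\<Sum>T\<in>F. real (card (T \<inter> (I - S)))) / card F"
    using finF neF by (simp add: sum.distrib add_divide_distrib)
  then have "measure_pmf.expectation (pmf_of_set F) (\<lambda>T. real (card ((S \<union> T) \<inter> I)))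
      = real (card S) + measure_pmf.expectation (pmf_of_set F) (\<lambda>T. real (card (T \<inter> (I - S))))"
    by (simp only: integral_pmf_of_set[OF neF finF])
  also have "\<dots> = real (card S) + real r * real (card (I - S)) / real (card (A - S))"
    unfolding F_def using A SI r by (simp add: expectation_card_Int_uniform_subset Diff_mono)
  finally show ?thesis unfolding F_def .
qed

lemma expectation_bind_pmf_of_set_const:
  assumes "A \<noteq> {}" "finite A" "\<And>x. x \<in> A \<Longrightarrow> finite (set_pmf (f x))"
    and "\<And>x. x \<in> A \<Longrightarrow> measure_pmf.expectation (f x) h = (c::real)"
  shows "measure_pmf.expectation (pmf_of_set A \<bind> f) h = c"
  using assms by (simp add: pmf_expectation_bind_pmf_of_set)

lemma finite_set_pmf_bind_pmf_of_set:
  assumes "A \<noteq> {}" "finite A" "\<And>x. x \<in> A \<Longrightarrow> finite (set_pmf (f x))"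
  shows "finite (set_pmf (pmf_of_set A \<bind> f))"
  using assms by (simp add: set_bind_pmf)

lemma card_all_edges_Diff:
  assumes "S \<subseteq> all_edges n"
  shows "card (all_edges n - S) = (n choose 2) - card S"
  using assms finite_subset[OF assms] by (simp add: card_Diff_subset card_all_edges)

lemma expectation_degree_star_union_uniform:
  assumes v: "v < n" and S: "S \<subseteq> incident_edges n v" "card S = k" and r: "r \<le> (n choose 2) - k"
  shows "measure_pmf.expectation (pmf_of_set {T. T \<subseteq> all_edges n - S \<and> card T = r})
           (\<lambda>T. real (degree (S \<union> T) v))
         = real k + real r * real (n - 1 - k) / real ((n choose 2) - k)"
proof -
  define F where "F = {T. T \<subseteq> all_edges n - S \<and> card T = r}"
  have SA: "S \<subseteq> all_edges n"
    using S(1) incident_edges_subset by blast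
  then have finS: "finite S"
    by (rule finite_subset) simp
  have card_rest: "card (all_edges n - S) = (n choose 2) - k"
    using card_all_edges_Diff[OF SA] S(2) by simp
  have card_star_rest: "card (incident_edges n v - S) = n - 1 - k"
    by (simp add: card_Diff_subset[OF finS S(1)] card_incident_edges[OF v] S(2))
  have ne: "F \<noteq> {}" and fin: "finite F"
    unfolding F_def using subsets_with_card_nonempty[of r "all_edges n - S"] r card_rest by simp_all
  have "degree (S \<union> T) v = card ((S \<union> T) \<inter> incident_edges n v)" if "T \<in> F" for T
    using that SA unfolding F_def by (intro degree_eq_card_Int_incident_edges) auto
  then have "measure_pmf.expectation (pmf_of_set F) (\<lambda>T. real (degree (S \<union> T) v))
      = measure_pmf.expectation (pmf_of_set F) (\<lambda>T. real (card ((S \<union> T) \<inter> incident_edges n v)))"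
    using ne fin by (simp add: integral_pmf_of_set)
  also have "\<dots> = real k + real r * real (n - 1 - k) / real ((n choose 2) - k)"
    using expectation_card_Int_union_uniform_subset[OF finite_all_edges S(1) incident_edges_subset]
      r card_rest card_star_rest S(2)
    unfolding F_def by simp
  finally show ?thesis
    unfolding F_def .
qed

lemma hub_degree_mean_eq:
  assumes "1 \<le> n" "k \<le> n - 1" "k \<le> m" "m \<le> n choose 2"
  shows "hub_degree_mean n m k
     = real k + (real m - real k) * (real n - 1 - real k) / (real (n choose 2) - real k)"
proof -
  define c where "c = real k + (real m - real k) * (real n - 1 - real k) / (real (n choose 2) - real k)"
  define Ss where "Ss v = {S. S \<subseteq> incident_edges n v \<and> card S = k}" for v
  define Ts where "Ts S = {T. T \<subseteq> all_edges n - S \<and> card T = m - k}" for S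
  have r: "m - k \<le> (n choose 2) - k"
    using assms by simp
  have c_eq: "c = real k + real (m - k) * real (n - 1 - k) / real ((n choose 2) - k)"
    unfolding c_def using assms by (simp add: of_nat_diff)
  have Ts: "Ts S \<noteq> {}" "finite (Ts S)"
    "measure_pmf.expectation (pmf_of_set (Ts S)) (\<lambda>T. real (degree (S \<union> T) v)) = c"
    if v: "v < n" and S: "S \<in> Ss v" for v S
  proof -
    have SI: "S \<subseteq> incident_edges n v" "card S = k"
      using S unfolding Ss_def by auto
    then have "m - k \<le> card (all_edges n - S)"
      using r card_all_edges_Diff[of S n] SI incident_edges_subset[of n v] by auto
    then show "Ts S \<noteq> {}" "finite (Ts S)"
      unfolding Ts_def using subsets_with_card_nonempty by simp_all
    show "measure_pmf.expectation (pmf_of_set (Ts S)) (\<lambda>T. real (degree (S \<union> T) v)) = c"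
      unfolding Ts_def c_eq by (rule expectation_degree_star_union_uniform[OF v SI r])
  qed
  have "Ss v \<noteq> {}" "finite (Ss v)" if "v < n" for v
    unfolding Ss_def using subsets_with_card_nonempty[of k "incident_edges n v"]
      card_incident_edges[OF that] assms by simp_all
  then show ?thesis
    unfolding c_def[symmetric] hub_degree_mean_def planted_def Ss_def[symmetric] Ts_def[symmetric]
      map_pmf_def[symmetric]
    using assms Ts
    by (intro expectation_bind_pmf_of_set_const finite_set_pmf_bind_pmf_of_set)
      (auto simp: lessThan_empty_iff)
qed

lemma smallo_diff_of_tendsto_ratios:
  fixes f g s :: "'a \<Rightarrow> real"
  assumes f: "((\<lambda>x. f x / s x) \<longlongrightarrow> c) F" and g: "((\<lambda>x. g x / s x) \<longlongrightarrow> 1) F"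
  shows "(\<lambda>x. f x - c * g x) \<in> o[F](g)"
proof (rule smalloI_tendsto)
  have ev: "eventually (\<lambda>x. g x / s x \<noteq> 0) F"
    using tendsto_imp_eventually_ne[OF g, of 0] by simp
  have "((\<lambda>x. (f x / s x - c * (g x / s x)) / (g x / s x)) \<longlongrightarrow> (c - c * 1) / 1) F"
    by (intro tendsto_intros f g) simp
  moreover have "eventually (\<lambda>x. (f x / s x - c * (g x / s x)) / (g x / s x) = (f x - c * g x) / g x) F"
    using ev by eventually_elim (auto simp: field_simps)
  ultimately show "((\<lambda>x. (f x - c * g x) / g x) \<longlongrightarrow> 0) F"
    by (simp add: Lim_transform_eventually)
  show "eventually (\<lambda>x. g x \<noteq> 0) F"
    using ev by eventually_elim auto
qed

lemma tendsto_mult_sqrt_minus_1: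
  fixes a x :: "'a \<Rightarrow> real"
  assumes a: "((\<lambda>y. a y * (x y - 1)) \<longlongrightarrow> c) F" and x: "(x \<longlongrightarrow> 1) F"
  shows "((\<lambda>y. a y * (sqrt (x y) - 1)) \<longlongrightarrow> c / 2) F"
proof -
  have "((\<lambda>y. a y * (x y - 1) / (sqrt (x y) + 1)) \<longlongrightarrow> c / (sqrt 1 + 1)) F"
    by (intro tendsto_intros a x) simp
  moreover have "eventually (\<lambda>y. x y > 0) F"
    using order_tendstoD(1)[OF x, of 0] by simp
  then have "eventually (\<lambda>y. a y * (x y - 1) / (sqrt (x y) + 1) = a y * (sqrt (x y) - 1)) F"
  proof eventually_elim
    case (elim y)
    then have "x y - 1 = (sqrt (x y) - 1) * (sqrt (x y) + 1)"
      by (simp add: algebra_simps)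
    moreover have "sqrt (x y) + 1 > 0"
      using elim by (simp add: add_pos_pos)
    ultimately show ?case by simp
  qed
  ultimately show ?thesis
    by (simp add: Lim_transform_eventually)
qed

text \<open>For \<open>a = n - 1\<close> and \<open>N = NN n\<close>, \<open>a M / N = 2m/n\<close> is the mean degree in \<open>G(n,m)\<close> and
  \<open>K + (M - K)(a - K)/(N - K)\<close> is the mean hub degree, by \<open>hub_degree_mean_eq\<close>.\<close>
lemma hypergeometric_mean_gap_bounds:
  fixes a K M N :: real
  assumes "0 \<le> K" "K \<le> a" "2 * a \<le> N" "0 \<le> M" "0 < N"
  shows "0 \<le> a * M / N - (M - K) * (a - K) / (N - K)"
    and "a * M / N - (M - K) * (a - K) / (N - K) \<le> 2 * K * (M + a) / N"
proof -
  have NK: "N - K \<ge> N / 2" "N - K > 0"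
    using assms by auto
  have gap: "a * M / N - (M - K) * (a - K) / (N - K) = K * (M * (N - a) + N * (a - K)) / (N * (N - K))"
    using NK assms by (simp add: field_simps)
  show "0 \<le> a * M / N - (M - K) * (a - K) / (N - K)"
    unfolding gap using NK assms by (intro divide_nonneg_pos mult_nonneg_nonneg add_nonneg_nonneg) auto
  have "K * (M * (N - a) + N * (a - K)) \<le> K * (N * (M + a))"
    using assms by (intro mult_left_mono) (auto simp: algebra_simps)
  also have "\<dots> = 2 * K * (M + a) / N * (N * (N / 2))"
    using assms by (simp add: field_simps)
  also have "\<dots> \<le> 2 * K * (M + a) / N * (N * (N - K))"
    using assms NK by (intro mult_left_mono) auto
  finally show "a * M / N - (M - K) * (a - K) / (N - K) \<le> 2 * K * (M + a) / N"
    unfolding gap using NK assms by (simp add: divide_le_eq)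
qed

lemma NN_eq: "NN n = real n * (real n - 1) / 2"
proof -
  have "2 * (n choose 2) = n * (n - 1)"
    by (metis Suc_1 binomial_absorption choose_one)
  then have "2 * real (n choose 2) = real n * real (n - 1)"
    by (metis of_nat_mult of_nat_numeral)
  then show ?thesis
    unfolding NN_def by (cases "n = 0") (auto simp: of_nat_diff)
qed

lemma sigma_deg_eq:
  assumes "n \<ge> 2"
  shows "sigma_deg n m = sqrt (2 * real m / real n * (1 - real m / NN n))
    * sqrt (NN n / (NN n - 1) * ((NN n - (real n - 1)) / (NN n - 1)))"
proof -
  have "(real n - 1) * (real m / NN n) = 2 * real m / real n"
    using assms unfolding NN_eq by (simp add: field_simps)
  then show ?thesis
    unfolding sigma_deg_def Let_def by (simp add: real_sqrt_mult[symmetric] mult.assoc)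
qed

lemma tstar_eq:
  assumes "ln (real n) > 0" "\<alpha> \<noteq> 0"
  shows "tstar \<alpha> n m = 2 * real m / real n + sqrt (2 * real m / real n * (1 - real m / NN n))
    * sqrt (2 * ln (real n)) * sqrt (1 - ln (ln (real n)) / (2 * \<alpha> * ln (real n)))"
proof -
  have "2 * ln (real n) - 1 / \<alpha> * ln (ln (real n))
      = 2 * ln (real n) * (1 - ln (ln (real n)) / (2 * \<alpha> * ln (real n)))"
    using assms by (simp add: field_simps)
  then show ?thesis
    unfolding tstar_def by (simp add: real_sqrt_mult mult.assoc)
qed

lemma finite_population_correction_tendsto:
  "(\<lambda>n. NN n / (NN n - 1) * ((NN n - (real n - 1)) / (NN n - 1))) \<longlonglongrightarrow> 1"
  unfolding NN_eq by real_asymp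

locale hub_regime =
  fixes \<gamma> :: real and k m :: "nat \<Rightarrow> nat"
  assumes k_large: "(\<lambda>n. (ln (real n))\<^sup>2) \<in> o(\<lambda>n. real (k n))"
    and k_small: "(\<lambda>n. real (k n)) \<in> o(\<lambda>n. sqrt (real n))"
    and m_eq: "\<And>n. m n = nat (round ((real (k n))\<^sup>2 * real n / (4 * ln (real n))
                               * (1 + \<gamma> / sqrt (ln (real n)))))"
begin

definition edge_ratio :: "nat \<Rightarrow> real" where
  "edge_ratio n = 4 * ln (real n) * real (m n) / (real n * (real (k n))\<^sup>2)"

definition sigma_lead :: "nat \<Rightarrow> real" where
  "sigma_lead n = real (k n) / sqrt (2 * ln (real n))"

lemma eventually_k_bounds:
  "eventually (\<lambda>n. 4 \<le> real n \<and> 1 \<le> ln (real n) \<and> 1 \<le> real (k n)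
     \<and> real (k n) \<le> sqrt (real n) \<and> sqrt (real n) \<le> real n - 1) sequentially"
proof -
  have "eventually (\<lambda>n. (ln (real n))\<^sup>2 \<le> real (k n)) sequentially"
    using landau_o.smallD[OF k_large zero_less_one] by eventually_elim auto
  moreover have "eventually (\<lambda>n. real (k n) \<le> sqrt (real n)) sequentially"
    using landau_o.smallD[OF k_small zero_less_one] by eventually_elim auto
  moreover have "eventually (\<lambda>n::nat. 4 \<le> real n \<and> 1 \<le> ln (real n) \<and> sqrt (real n) \<le> real n - 1)
      sequentially"
    by (intro eventually_conj; real_asymp)
  ultimately show ?thesis
  proof eventually_elim
    case (elim n)
    then have "1 \<le> (ln (real n))\<^sup>2"
      by (simp add: one_le_power)
    with elim show ?case by linarith
  qed
qed

lemma k_sq_over_n_tendsto: "(\<lambda>n. (real (k n))\<^sup>2 / real n) \<longlonglongrightarrow> 0"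
proof -
  have "(\<lambda>n. (real (k n) / sqrt (real n))\<^sup>2) \<longlonglongrightarrow> 0\<^sup>2"
    using smalloD_tendsto[OF k_small] by (intro tendsto_power) simp
  then show ?thesis
    by (simp add: power_divide)
qed

text \<open>Rounding \<open>m n\<close> to an integer costs at most \<open>1/2\<close>, which is negligible against
  \<open>k\<^sup>2 n / ln n\<close>.\<close>
lemma sqrt_ln_edge_ratio_tendsto: "(\<lambda>n. sqrt (ln (real n)) * (edge_ratio n - 1)) \<longlonglongrightarrow> \<gamma>"
proof -
  define X where "X n = (real (k n))\<^sup>2 * real n / (4 * ln (real n)) * (1 + \<gamma> / sqrt (ln (real n)))"
    for n
  have "eventually (\<lambda>n::nat. 1 + \<gamma> / sqrt (ln (real n)) > 0) sequentially"
    by real_asymp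
  with eventually_k_bounds
  have "eventually (\<lambda>n. norm (sqrt (ln (real n)) * (edge_ratio n - 1) - \<gamma>)
          \<le> 2 * ln (real n) * sqrt (ln (real n)) / real n) sequentially"
  proof eventually_elim
    case (elim n)
    define L where "L = ln (real n)"
    define K where "K = real (k n)"
    have pos: "L > 0" "K \<ge> 1" "real n > 0" "1 + \<gamma> / sqrt L > 0"
      using elim by (auto simp: L_def K_def)
    then have "X n \<ge> 0"
      unfolding X_def L_def[symmetric] K_def[symmetric] by simp
    then have "round (X n) \<ge> 0"
      using round_mono[of 0 "X n"] by simp
    then have "real (m n) = of_int (round (X n))"
      unfolding m_eq X_def[symmetric] by simp
    then have round: "\<bar>real (m n) - X n\<bar> \<le> 1 / 2"
      using of_int_round_abs_le[of "X n"] by simp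
    have "sqrt L * (edge_ratio n - 1) - \<gamma> = 4 * L * sqrt L / (real n * K\<^sup>2) * (real (m n) - X n)"
      unfolding edge_ratio_def X_def L_def[symmetric] K_def[symmetric] using pos
      by (simp add: field_simps)
    also have "\<bar>\<dots>\<bar> = 4 * L * sqrt L / (real n * K\<^sup>2) * \<bar>real (m n) - X n\<bar>"
      using pos by (simp add: abs_mult)
    also have "\<dots> \<le> 4 * L * sqrt L / (real n * K\<^sup>2) * (1 / 2)"
      using round pos by (intro mult_left_mono) auto
    also have "\<dots> \<le> 2 * L * sqrt L / real n"
      using pos by (simp add: field_simps one_le_power mult_le_cancel_left1)
    finally show ?case
      by (simp add: L_def)
  qed
  moreover have "(\<lambda>n::nat. 2 * ln (real n) * sqrt (ln (real n)) / real n) \<longlonglongrightarrow> 0"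
    by real_asymp
  ultimately show ?thesis
    by (rule LIM_zero_cancel[OF Lim_null_comparison])
qed

lemma inverse_sqrt_ln_tendsto: "(\<lambda>n::nat. 1 / sqrt (ln (real n))) \<longlonglongrightarrow> 0"
  by real_asymp

lemma edge_ratio_tendsto: "edge_ratio \<longlonglongrightarrow> 1"
proof -
  have "(\<lambda>n. 1 + sqrt (ln (real n)) * (edge_ratio n - 1) * (1 / sqrt (ln (real n)))) \<longlonglongrightarrow> 1 + \<gamma> * 0"
    by (intro tendsto_intros sqrt_ln_edge_ratio_tendsto inverse_sqrt_ln_tendsto)
  moreover have "eventually (\<lambda>n. 1 + sqrt (ln (real n)) * (edge_ratio n - 1) * (1 / sqrt (ln (real n)))
      = edge_ratio n) sequentially"
    using eventually_k_bounds by eventually_elim auto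
  ultimately show ?thesis
    by (simp add: Lim_transform_eventually)
qed

lemma sqrt_ln_edge_density_tendsto: "(\<lambda>n. sqrt (ln (real n)) * (real (m n) / NN n)) \<longlonglongrightarrow> 0"
proof -
  have "(\<lambda>n::nat. real n / (2 * sqrt (ln (real n)) * (real n - 1))) \<longlonglongrightarrow> 0"
    by real_asymp
  then have "(\<lambda>n. edge_ratio n * ((real (k n))\<^sup>2 / real n) * (real n / (2 * sqrt (ln (real n)) * (real n - 1))))
      \<longlonglongrightarrow> 1 * 0 * 0"
    by (intro tendsto_intros edge_ratio_tendsto k_sq_over_n_tendsto)
  moreover have "eventually (\<lambda>n. edge_ratio n * ((real (k n))\<^sup>2 / real n) * (real n / (2 * sqrt (ln (real n)) * (real n - 1)))
      = sqrt (ln (real n)) * (real (m n) / NN n)) sequentially"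
    using eventually_k_bounds
  proof eventually_elim
    case (elim n)
    have "sqrt (ln (real n)) * sqrt (ln (real n)) = ln (real n)"
      using elim by simp
    with elim show ?case
      unfolding edge_ratio_def NN_eq by (simp add: field_simps)
  qed
  ultimately show ?thesis
    by (simp add: Lim_transform_eventually)
qed

lemma edge_density_tendsto: "(\<lambda>n. real (m n) / NN n) \<longlonglongrightarrow> 0"
proof -
  have "(\<lambda>n. sqrt (ln (real n)) * (real (m n) / NN n) * (1 / sqrt (ln (real n)))) \<longlonglongrightarrow> 0 * 0"
    by (intro tendsto_intros sqrt_ln_edge_density_tendsto inverse_sqrt_ln_tendsto)
  moreover have "eventually (\<lambda>n. sqrt (ln (real n)) * (real (m n) / NN n) * (1 / sqrt (ln (real n)))
      = real (m n) / NN n) sequentially"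
    using eventually_k_bounds by eventually_elim auto
  ultimately show ?thesis
    by (simp add: Lim_transform_eventually)
qed

lemma eventually_hub_degree_mean_eq:
  "eventually (\<lambda>n. hub_degree_mean n (m n) (k n)
     = real (k n) + (real (m n) - real (k n)) * (real n - 1 - real (k n)) / (NN n - real (k n)))
     sequentially"
proof -
  have "eventually (\<lambda>n. edge_ratio n > 1 / 2) sequentially"
    using order_tendstoD(1)[OF edge_ratio_tendsto, of "1 / 2"] by simp
  moreover have "eventually (\<lambda>n. real (m n) / NN n < 1) sequentially"
    using order_tendstoD(2)[OF edge_density_tendsto, of 1] by simp
  moreover have "eventually (\<lambda>n::nat. 1 \<le> real n / (8 * ln (real n))) sequentially"
    by real_asymp
  ultimately show ?thesis
    using eventually_k_bounds
  proof eventually_elim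
    case (elim n)
    define L K M where "L = ln (real n)" and "K = real (k n)" and "M = real (m n)"
    have pos: "L > 0" "K \<ge> 1" "real n > 0" "NN n > 0"
      using elim unfolding L_def K_def NN_eq by auto
    have "1 \<le> real n / (8 * L)"
      using elim by (simp add: L_def)
    have "K \<le> K\<^sup>2"
      using pos by (simp add: power2_eq_square)
    also have "\<dots> \<le> K\<^sup>2 * (real n / (8 * L))"
      using \<open>1 \<le> real n / (8 * L)\<close> mult_left_mono[of 1 "real n / (8 * L)" "K\<^sup>2"] by simp
    also have "\<dots> = 1 / 2 * (K\<^sup>2 * real n / (4 * L))"
      by simp
    also have "\<dots> \<le> edge_ratio n * (K\<^sup>2 * real n / (4 * L))"
      using elim pos by (intro mult_right_mono) auto
    also have "\<dots> = M"
      using pos unfolding edge_ratio_def L_def K_def M_def by simp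
    finally have "k n \<le> m n"
      by (simp add: K_def M_def)
    moreover have "real (k n) \<le> real (n - 1)"
      using elim by (auto simp: of_nat_diff)
    then have "k n \<le> n - 1"
      by (simp only: of_nat_le_iff)
    moreover have "real (m n) < real (n choose 2)"
      using elim pos by (simp add: NN_def)
    ultimately show ?case
      using pos by (subst hub_degree_mean_eq) (auto simp: NN_def)
  qed
qed

lemma hub_excess_tendsto:
  "(\<lambda>n. (2 * real (m n) / real n + real (k n) - hub_degree_mean n (m n) (k n)) / sigma_lead n)
     \<longlonglongrightarrow> 0"
proof (rule Lim_null_comparison)
  define bound where "bound n = 2 * sqrt 2 * (sqrt (ln (real n)) * (real (m n) / NN n)
    + sqrt (ln (real n)) * ((real n - 1) / NN n))" for n
  have "(\<lambda>n::nat. sqrt (ln (real n)) * ((real n - 1) / NN n)) \<longlonglongrightarrow> 0"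
    unfolding NN_eq by real_asymp
  then have "bound \<longlonglongrightarrow> 2 * sqrt 2 * (0 + 0)"
    unfolding bound_def by (intro tendsto_intros sqrt_ln_edge_density_tendsto)
  then show "bound \<longlonglongrightarrow> 0"
    by simp
  show "eventually (\<lambda>n. norm ((2 * real (m n) / real n + real (k n) - hub_degree_mean n (m n) (k n))
      / sigma_lead n) \<le> bound n) sequentially"
    using eventually_hub_degree_mean_eq eventually_k_bounds
  proof eventually_elim
    case (elim n)
    define L K M a where "L = ln (real n)" and "K = real (k n)" and "M = real (m n)"
      and "a = real n - 1"
    have pos: "L > 0" "K \<ge> 1" "K \<le> a" "NN n > 0"
      using elim unfolding L_def K_def a_def NN_eq by auto
    have "4 * a \<le> real n * a"
      using elim unfolding a_def by (intro mult_right_mono) auto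
    then have a_le: "2 * a \<le> NN n"
      unfolding a_def NN_eq by simp
    define gap where "gap = a * M / NN n - (M - K) * (a - K) / (NN n - K)"
    have "2 * M / real n = a * M / NN n"
      using pos unfolding a_def NN_eq by (simp add: field_simps)
    then have excess: "2 * M / real n + K - hub_degree_mean n (m n) (k n) = gap"
      unfolding gap_def using elim by (simp add: K_def M_def a_def)
    have gap_bounds: "0 \<le> gap" "gap \<le> 2 * K * (M + a) / NN n"
      unfolding gap_def using hypergeometric_mean_gap_bounds[of K a "NN n" M] pos a_le
      by (auto simp: M_def)
    have "sigma_lead n = K / (sqrt 2 * sqrt L)"
      unfolding sigma_lead_def K_def L_def by (simp add: real_sqrt_mult)
    then have "norm (gap / sigma_lead n) = gap * (sqrt 2 * sqrt L) / K"
      using gap_bounds pos by simp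
    also have "\<dots> \<le> 2 * K * (M + a) / NN n * (sqrt 2 * sqrt L) / K"
      using gap_bounds pos by (intro divide_right_mono mult_right_mono) auto
    also have "\<dots> = bound n"
      unfolding bound_def L_def M_def a_def using pos by (simp add: field_simps)
    finally show ?case
      by (simp add: excess[unfolded K_def M_def])
  qed
qed

definition variance_ratio :: "nat \<Rightarrow> real" where
  "variance_ratio n = edge_ratio n * (1 - real (m n) / NN n)"

lemma eventually_sqrt_binomial_variance_eq:
  "eventually (\<lambda>n. sqrt (2 * real (m n) / real n * (1 - real (m n) / NN n))
     = sigma_lead n * sqrt (variance_ratio n)) sequentially"
  using eventually_k_bounds
proof eventually_elim
  case (elim n)
  then have "2 * real (m n) / real n = (sigma_lead n)\<^sup>2 * edge_ratio n"
    unfolding sigma_lead_def edge_ratio_def by (simp add: power_divide field_simps)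
  moreover have "sigma_lead n \<ge> 0"
    using elim unfolding sigma_lead_def by simp
  ultimately show ?case
    unfolding variance_ratio_def by (simp add: real_sqrt_mult mult.assoc)
qed

lemma variance_ratio_tendsto: "variance_ratio \<longlonglongrightarrow> 1"
proof -
  have "variance_ratio \<longlonglongrightarrow> 1 * (1 - 0)"
    unfolding variance_ratio_def[abs_def] by (intro tendsto_intros edge_ratio_tendsto edge_density_tendsto)
  then show ?thesis
    by simp
qed

lemma sqrt_ln_sqrt_variance_ratio_tendsto:
  "(\<lambda>n. sqrt (ln (real n)) * (sqrt (variance_ratio n) - 1)) \<longlonglongrightarrow> \<gamma> / 2"
proof (rule tendsto_mult_sqrt_minus_1[OF _ variance_ratio_tendsto])
  have "(\<lambda>n. sqrt (ln (real n)) * (edge_ratio n - 1) * (1 - real (m n) / NN n)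
      - sqrt (ln (real n)) * (real (m n) / NN n)) \<longlonglongrightarrow> \<gamma> * (1 - 0) - 0"
    by (intro tendsto_intros sqrt_ln_edge_ratio_tendsto edge_density_tendsto sqrt_ln_edge_density_tendsto)
  then show "(\<lambda>n. sqrt (ln (real n)) * (variance_ratio n - 1)) \<longlonglongrightarrow> \<gamma>"
    unfolding variance_ratio_def by (simp add: algebra_simps)
qed

lemma sigma_deg_ratio_tendsto: "(\<lambda>n. sigma_deg n (m n) / sigma_lead n) \<longlonglongrightarrow> 1"
proof -
  have "(\<lambda>n. sqrt (variance_ratio n) * sqrt (NN n / (NN n - 1) * ((NN n - (real n - 1)) / (NN n - 1))))
      \<longlonglongrightarrow> sqrt 1 * sqrt 1"
    by (intro tendsto_intros variance_ratio_tendsto finite_population_correction_tendsto)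
  moreover have "eventually (\<lambda>n. sqrt (variance_ratio n) * sqrt (NN n / (NN n - 1) * ((NN n - (real n - 1)) / (NN n - 1)))
      = sigma_deg n (m n) / sigma_lead n) sequentially"
    using eventually_k_bounds eventually_sqrt_binomial_variance_eq
  proof eventually_elim
    case (elim n)
    then have "sigma_lead n > 0" "n \<ge> 2"
      unfolding sigma_lead_def by auto
    with elim show ?case
      by (simp add: sigma_deg_eq)
  qed
  ultimately show ?thesis
    by (simp add: Lim_transform_eventually)
qed

lemma threshold_gap_ratio_tendsto:
  assumes "\<alpha> > 0"
  shows "(\<lambda>n. (tstar \<alpha> n (m n) - hub_degree_mean n (m n) (k n)) / sigma_lead n)
    \<longlonglongrightarrow> \<gamma> / sqrt 2"
proof -
  define u where "u n = sqrt (1 - ln (ln (real n)) / (2 * \<alpha> * ln (real n)))" for n :: nat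
  have u: "u \<longlonglongrightarrow> 1" "(\<lambda>n. sqrt (ln (real n)) * (u n - 1)) \<longlonglongrightarrow> 0"
    unfolding u_def using assms by real_asymp+
  have "(\<lambda>n. (2 * real (m n) / real n + real (k n) - hub_degree_mean n (m n) (k n)) / sigma_lead n
      + sqrt 2 * (sqrt (ln (real n)) * (sqrt (variance_ratio n) - 1) * u n + sqrt (ln (real n)) * (u n - 1)))
      \<longlonglongrightarrow> 0 + sqrt 2 * (\<gamma> / 2 * 1 + 0)"
    by (intro tendsto_intros hub_excess_tendsto sqrt_ln_sqrt_variance_ratio_tendsto u)
  moreover have "sqrt 2 * (\<gamma> / 2 * 1 + 0) = \<gamma> / sqrt 2"
    by (simp add: field_simps)
  moreover have "eventually (\<lambda>n. (2 * real (m n) / real n + real (k n) - hub_degree_mean n (m n) (k n)) / sigma_lead n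
      + sqrt 2 * (sqrt (ln (real n)) * (sqrt (variance_ratio n) - 1) * u n + sqrt (ln (real n)) * (u n - 1))
      = (tstar \<alpha> n (m n) - hub_degree_mean n (m n) (k n)) / sigma_lead n) sequentially"
    using eventually_k_bounds eventually_sqrt_binomial_variance_eq
  proof eventually_elim
    case (elim n)
    have s: "sigma_lead n > 0" "real (k n) = sigma_lead n * sqrt 2 * sqrt (ln (real n))"
      using elim unfolding sigma_lead_def by (auto simp: real_sqrt_mult)
    have "tstar \<alpha> n (m n) = 2 * real (m n) / real n
        + sigma_lead n * sqrt (variance_ratio n) * (sqrt 2 * sqrt (ln (real n))) * u n"
      using elim assms by (simp add: tstar_eq u_def real_sqrt_mult)
    then show ?case
      using s by (simp add: field_simps)
  qed
  ultimately show ?thesis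
    by (simp add: Lim_transform_eventually)
qed

end

theorem mainTheorem7:
  fixes \<gamma> \<alpha> :: real and k m :: "nat \<Rightarrow> nat"
  assumes "\<alpha> > 1"
    and "(\<lambda>n. (ln (real n))\<^sup>2) \<in> o(\<lambda>n. real (k n))"
    and "(\<lambda>n. real (k n)) \<in> o(\<lambda>n. sqrt (real n))"
    and "\<And>n. m n = nat (round ((real (k n))\<^sup>2 * real n / (4 * ln (real n))
                               * (1 + \<gamma> / sqrt (ln (real n)))))"
  shows "(\<lambda>n. tstar \<alpha> n (m n) - hub_degree_mean n (m n) (k n)
              - \<gamma> / sqrt 2 * sigma_deg n (m n))
         \<in> o(\<lambda>n. sigma_deg n (m n))"
proof -
  interpret hub_regime \<gamma> k m
    using assms(2-4) by unfold_locales
  show ?thesis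
    using smallo_diff_of_tendsto_ratios[OF threshold_gap_ratio_tendsto sigma_deg_ratio_tendsto] assms(1)
    by simp
qed

end
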